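(* Let $\mathcal C\subseteq(S^2)^n$ be a vector trifferent code equipped with a fixed total order $<$. For $x,y,a,b\in\mathcal C$ with $x<y$ and $a<b$, \[ P_{x,y}(E_{a,b})=\begin{cases}\{0\}, & (a,b)\ne(x,y),\\ E_{a,b}, & (a,b)=(x,y).\end{cases} \] Consequently the sum $\sum_{x<y} E_{x,y}$ of subspaces of $(\mathbb R^3)^{\otimes n}$, over all pairs $x<y$ in $\mathcal C$, is a direct sum.
   Context: A vector trifferent code of block length $n$ is a subset $\mathcal C\subseteq(S^2)^n$ ($S^2$ the unit sphere in $\mathbb R^3$) such that for any three distinct $x,y,z\in\mathcal C$ there is $i\in[n]$ with $x_i,y_i,z_i$ mutually orthogonal. For nonzero $u,v\in\mathbb R^3$ define the subspace $f(u,v)=u^\perp\cap v^\perp$ if $u\perp v$, and $f(u,v)=u^\perp$ otherwise, where $u^\perp$ is the orthogonal complement of $u$ in $\mathbb R^3$. For $x,y\in\mathcal C$ define $E_{x,y}=\bigotimes_{i=1}^n f(x_i,y_i)\subseteq(\mathbb R^3)^{\otimes n}$ and $P_{x,y}=\bigotimes_{i=1}^n P_{f(x_i,y_i)}$, where $P_S$ denotes the orthogonal projection of $\mathbb R^3$ onto the subspace $S$. *)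

theory Defs
  imports "HOL-Analysis.Analysis"
begin

definition vector_trifferent :: "nat \<Rightarrow> (real^3) list set \<Rightarrow> bool" where
  "vector_trifferent n C \<longleftrightarrow>
     (\<forall>x\<in>C. length x = n \<and> (\<forall>i<n. norm (x ! i) = 1)) \<and>
     (\<forall>x\<in>C. \<forall>y\<in>C. \<forall>z\<in>C. x \<noteq> y \<and> y \<noteq> z \<and> x \<noteq> z \<longrightarrow>
        (\<exists>i<n. orthogonal (x ! i) (y ! i) \<and> orthogonal (y ! i) (z ! i)
               \<and> orthogonal (x ! i) (z ! i)))"

definition fsub :: "real^3 \<Rightarrow> real^3 \<Rightarrow> (real^3) set" where
  "fsub u v = (if orthogonal u v then orthogonal_comp {u} \<inter> orthogonal_comp {v}
               else orthogonal_comp {u})"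

definition proj :: "(real^3) set \<Rightarrow> real^3 \<Rightarrow> real^3" where
  "proj S v = (THE p. p \<in> S \<and> (\<forall>s\<in>S. orthogonal (v - p) s))"

text \<open>The n-fold tensor power of R^3 is modelled as real functions on index
  lists of length n (with value 0 on lists of other length); the basis of R^3 is
  indexed by the type 3.\<close>
definition tensor_space :: "nat \<Rightarrow> (3 list \<Rightarrow> real) set" where
  "tensor_space n = {t. \<forall>js. length js \<noteq> n \<longrightarrow> t js = 0}"

definition ptensor :: "nat \<Rightarrow> (nat \<Rightarrow> real^3) \<Rightarrow> 3 list \<Rightarrow> real" where
  "ptensor n v js = (if length js = n then (\<Prod>i<n. v i $ (js ! i)) else 0)"

definition tensor_subspace :: "nat \<Rightarrow> (nat \<Rightarrow> (real^3) set) \<Rightarrow> (3 list \<Rightarrow> real) set" where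
  "tensor_subspace n S = {t. \<exists>m (c :: nat \<Rightarrow> real) (v :: nat \<Rightarrow> nat \<Rightarrow> real^3).
      (\<forall>k<m. \<forall>i<n. v k i \<in> S i) \<and> t = (\<lambda>js. \<Sum>k<m. c k * ptensor n (v k) js)}"

definition tensor_map :: "nat \<Rightarrow> (nat \<Rightarrow> real^3 \<Rightarrow> real^3) \<Rightarrow> (3 list \<Rightarrow> real) \<Rightarrow> 3 list \<Rightarrow> real" where
  "tensor_map n A t js = (if length js = n then
      (\<Sum>ks\<in>{ks. length ks = n}. (\<Prod>i<n. matrix (A i) $ (js ! i) $ (ks ! i)) * t ks)
    else 0)"

definition Esub :: "nat \<Rightarrow> (real^3) list \<Rightarrow> (real^3) list \<Rightarrow> (3 list \<Rightarrow> real) set" where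
  "Esub n x y = tensor_subspace n (\<lambda>i. fsub (x ! i) (y ! i))"

definition Pmap :: "nat \<Rightarrow> (real^3) list \<Rightarrow> (real^3) list \<Rightarrow> (3 list \<Rightarrow> real) \<Rightarrow> 3 list \<Rightarrow> real" where
  "Pmap n x y = tensor_map n (\<lambda>i. proj (fsub (x ! i) (y ! i)))"

end

theory Submission
  imports Defs
begin

text \<open>If the pairs \<open>x < y\<close> and \<open>a < b\<close> differ, then \<open>{a, b} \<subseteq> {x, y}\<close> is impossible by asymmetry
  of the order, so some \<open>c \<in> {a, b}\<close> differs from both \<open>x\<close> and \<open>y\<close>. Trifference gives a coordinate
  \<open>i\<close> where \<open>x\<^sub>i, y\<^sub>i, c\<^sub>i\<close> form an orthonormal basis; there \<open>f(x\<^sub>i, y\<^sub>i)\<close> is the line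
  spanned by \<open>c\<^sub>i\<close>, while \<open>f(a\<^sub>i, b\<^sub>i) \<subseteq> c\<^sub>i\<^sup>\<bottom>\<close> (if \<open>c = b\<close>, then \<open>a \<in> {x, y}\<close> is
  orthogonal to \<open>b\<close> in that coordinate). So the \<open>i\<close>-th factor of \<open>P\<^sub>x\<^sub>,\<^sub>y\<close> kills
  \<open>f(a\<^sub>i, b\<^sub>i)\<close> and hence \<open>P\<^sub>x\<^sub>,\<^sub>y\<close> kills \<open>E\<^sub>a\<^sub>,\<^sub>b\<close>, while it fixes \<open>E\<^sub>x\<^sub>,\<^sub>y\<close>. Applying
  \<open>P\<^sub>x\<^sub>,\<^sub>y\<close> to a vanishing sum of elements of the \<open>E\<^sub>a\<^sub>,\<^sub>b\<close> isolates the \<open>(x, y)\<close> summand.\<close>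

lemma sum_lists_length_prod:
  fixes g :: "nat \<Rightarrow> 'a::finite \<Rightarrow> 'b::comm_semiring_1"
  shows "(\<Sum>ks\<in>{ks. length ks = n}. \<Prod>i<n. g i (ks ! i)) = (\<Prod>i<n. \<Sum>k\<in>UNIV. g i k)"
proof (induction n arbitrary: g)
  case 0
  then show ?case by simp
next
  case (Suc n)
  let ?L = "{ks::'a list. length ks = n}"
  have lists_Suc: "{ks::'a list. length ks = Suc n} = (\<lambda>(k, ks). k # ks) ` (UNIV \<times> ?L)"
    by (auto simp: length_Suc_conv image_iff)
  have "(\<Sum>ks\<in>{ks. length ks = Suc n}. \<Prod>i<Suc n. g i (ks ! i))
      = (\<Sum>(k, ks)\<in>UNIV \<times> ?L. g 0 k * (\<Prod>i<n. g (Suc i) (ks ! i)))"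
    unfolding lists_Suc
    by (subst sum.reindex) (auto simp: inj_on_def prod.lessThan_Suc_shift case_prod_beta
        simp del: prod.lessThan_Suc)
  also have "\<dots> = (\<Sum>k\<in>UNIV. g 0 k) * (\<Sum>ks\<in>?L. \<Prod>i<n. g (Suc i) (ks ! i))"
    by (simp add: sum.cartesian_product[symmetric] sum_product)
  also have "\<dots> = (\<Prod>i<Suc n. \<Sum>k\<in>UNIV. g i k)"
    by (simp add: Suc[of "\<lambda>i. g (Suc i)"] prod.lessThan_Suc_shift del: prod.lessThan_Suc)
  finally show ?case .
qed

lemma tensor_map_sum:
  assumes "finite K"
  shows "tensor_map n A (\<lambda>js. \<Sum>k\<in>K. c k * t k js) = (\<lambda>js. \<Sum>k\<in>K. c k * tensor_map n A (t k) js)"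
  using assms
  by (auto simp: tensor_map_def sum_distrib_left sum_distrib_right mult_ac sum.swap[where A = K])

lemma tensor_map_ptensor:
  assumes "\<forall>i<n. linear (A i)"
  shows "tensor_map n A (ptensor n v) = ptensor n (\<lambda>i. A i (v i))"
proof
  fix js :: "3 list"
  show "tensor_map n A (ptensor n v) js = ptensor n (\<lambda>i. A i (v i)) js"
  proof (cases "length js = n")
    case True
    have "tensor_map n A (ptensor n v) js
        = (\<Sum>ks\<in>{ks. length ks = n}. \<Prod>i<n. matrix (A i) $ (js ! i) $ (ks ! i) * v i $ (ks ! i))"
      using True by (simp add: tensor_map_def ptensor_def prod.distrib)
    also have "\<dots> = (\<Prod>i<n. \<Sum>k\<in>UNIV. matrix (A i) $ (js ! i) $ k * v i $ k)"
      by (rule sum_lists_length_prod)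
    also have "\<dots> = (\<Prod>i<n. (matrix (A i) *v v i) $ (js ! i))"
      by (simp add: matrix_vector_mult_def)
    also have "\<dots> = (\<Prod>i<n. A i (v i) $ (js ! i))"
      using assms by (simp add: matrix_vector_mul)
    finally show ?thesis
      using True by (simp add: ptensor_def)
  qed (simp add: tensor_map_def ptensor_def)
qed

lemma tensor_map_lincomb:
  assumes "\<forall>i<n. linear (A i)"
  shows "tensor_map n A (\<lambda>js. \<Sum>k<(m::nat). c k * ptensor n (v k) js)
       = (\<lambda>js. \<Sum>k<m. c k * ptensor n (\<lambda>i. A i (v k i)) js)"
  by (subst tensor_map_sum) (simp_all add: tensor_map_ptensor[OF assms])

lemma zero_in_tensor_subspace: "(\<lambda>_. 0) \<in> tensor_subspace n S"
  unfolding tensor_subspace_def by (intro CollectI exI[of _ 0]) simp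

lemma tensor_map_tensor_subspace_id:
  assumes "\<forall>i<n. linear (A i) \<and> (\<forall>v\<in>S i. A i v = v)"
    and "t \<in> tensor_subspace n S"
  shows "tensor_map n A t = t"
proof -
  obtain m :: nat and c v where v: "\<forall>k<m. \<forall>i<n. v k i \<in> S i"
    and t: "t = (\<lambda>js. \<Sum>k<m. c k * ptensor n (v k) js)"
    using assms(2) unfolding tensor_subspace_def by blast
  have "ptensor n (\<lambda>i. A i (v k i)) = ptensor n (v k)" if "k < m" for k
    using assms(1) v that unfolding ptensor_def by (intro ext) (auto intro!: prod.cong)
  then show ?thesis
    using assms(1) by (simp add: t tensor_map_lincomb)
qed

lemma tensor_map_tensor_subspace_eq_0:
  assumes "\<forall>i<n. linear (A i)" and "i < n" and "\<forall>v\<in>S i. A i v = 0"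
    and "t \<in> tensor_subspace n S"
  shows "tensor_map n A t = (\<lambda>_. 0)"
proof -
  obtain m :: nat and c v where v: "\<forall>k<m. \<forall>i<n. v k i \<in> S i"
    and t: "t = (\<lambda>js. \<Sum>k<m. c k * ptensor n (v k) js)"
    using assms(4) unfolding tensor_subspace_def by blast
  have "ptensor n (\<lambda>i. A i (v k i)) = (\<lambda>_. 0)" if "k < m" for k
    using assms(2,3) v that unfolding ptensor_def by (intro ext) (auto intro!: prod_zero bexI[of _ i])
  then show ?thesis
    using assms(1) by (simp add: t tensor_map_lincomb)
qed

lemma proj_eqI:
  assumes "subspace S" "p \<in> S" "\<forall>s\<in>S. orthogonal (v - p) s"
  shows "proj S v = p"
  unfolding proj_def
proof (rule the_equality)
  show "p \<in> S \<and> (\<forall>s\<in>S. orthogonal (v - p) s)"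
    using assms by simp
next
  fix q
  assume q: "q \<in> S \<and> (\<forall>s\<in>S. orthogonal (v - q) s)"
  then have "p - q \<in> S"
    using assms by (simp add: subspace_diff)
  then have "orthogonal (v - p) (p - q)" "orthogonal (v - q) (p - q)"
    using assms q by auto
  then have "(p - q) \<bullet> (p - q) = 0"
    by (simp add: orthogonal_def inner_diff_left inner_diff_right inner_commute)
  then show "q = p" by simp
qed

lemma proj_in_orthogonal:
  assumes "subspace S"
  shows "proj S v \<in> S \<and> (\<forall>s\<in>S. orthogonal (v - proj S v) s)"
proof -
  obtain p z where "p \<in> span S" "\<And>w. w \<in> span S \<Longrightarrow> orthogonal z w" "v = p + z"
    using orthogonal_subspace_decomp_exists[of S v] by metis
  moreover have "span S = S"
    using assms by (simp add: span_eq_iff)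
  ultimately have "p \<in> S \<and> (\<forall>s\<in>S. orthogonal (v - p) s)"
    by simp
  then show ?thesis
    using proj_eqI[OF assms, of p v] by simp
qed

lemma linear_proj:
  assumes "subspace S"
  shows "linear (proj S)"
proof (rule linearI)
  fix u v
  show "proj S (u + v) = proj S u + proj S v"
    using proj_in_orthogonal[OF assms, of u] proj_in_orthogonal[OF assms, of v]
    by (intro proj_eqI[OF assms])
      (auto simp: subspace_add[OF assms] orthogonal_def algebra_simps inner_add_left)
next
  fix c :: real and v
  show "proj S (c *\<^sub>R v) = c *\<^sub>R proj S v"
    using proj_in_orthogonal[OF assms, of v]
    by (intro proj_eqI[OF assms])
      (auto simp: subspace_scale[OF assms] orthogonal_def simp flip: scaleR_diff_right)
qed

lemma proj_eq_self: "subspace S \<Longrightarrow> v \<in> S \<Longrightarrow> proj S v = v"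
  by (rule proj_eqI) (auto simp: orthogonal_def)

lemma proj_eq_0: "subspace S \<Longrightarrow> \<forall>s\<in>S. orthogonal v s \<Longrightarrow> proj S v = 0"
  by (rule proj_eqI) (auto simp: subspace_0)

lemma orthogonal_comp_pair_subset_span:
  fixes x y z :: "'a::euclidean_space"
  assumes "DIM('a) = 3" and "x \<noteq> 0" "y \<noteq> 0" "z \<noteq> 0"
    and "orthogonal x y" "orthogonal y z" "orthogonal x z"
  shows "orthogonal_comp {x} \<inter> orthogonal_comp {y} \<subseteq> span {z}"
proof
  fix s
  assume "s \<in> orthogonal_comp {x} \<inter> orthogonal_comp {y}"
  then have s_perp: "s \<bullet> x = 0" "s \<bullet> y = 0"
    by (auto simp: orthogonal_comp_def orthogonal_def inner_commute)
  have z_perp: "z \<bullet> x = 0" "z \<bullet> y = 0"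
    using assms by (auto simp: orthogonal_def inner_commute)
  have "pairwise orthogonal {x, y, z}"
    using assms by (auto simp: pairwise_def orthogonal_commute)
  then have "independent {x, y, z}"
    using assms pairwise_orthogonal_independent by blast
  moreover have "x \<noteq> y" "y \<noteq> z" "x \<noteq> z"
    using assms orthogonal_self by metis+
  then have "card {x, y, z} = dim (UNIV :: 'a set)"
    using assms by simp
  ultimately have basis: "span {x, y, z} = UNIV"
    using card_eq_dim[of "{x, y, z}" UNIV] by auto
  define t where "t = s - ((s \<bullet> z) / (z \<bullet> z)) *\<^sub>R z"
  have "orthogonal t x" "orthogonal t y" "orthogonal t z"
    using s_perp z_perp assms(4) by (simp_all add: t_def orthogonal_def inner_diff_left)
  then have "orthogonal t t"
    using basis by (intro orthogonal_to_span[of t "{x, y, z}"]) auto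
  then have "s = ((s \<bullet> z) / (z \<bullet> z)) *\<^sub>R z"
    by (simp add: t_def orthogonal_self)
  then show "s \<in> span {z}"
    by (metis span_base span_scale insertI1)
qed

lemma subspace_fsub: "subspace (fsub u v)"
  unfolding fsub_def by (auto intro: subspace_inter subspace_orthogonal_comp)

lemma fsub_subset_orthogonal_comp_left: "fsub u v \<subseteq> orthogonal_comp {u}"
  unfolding fsub_def by auto

lemma fsub_subset_orthogonal_comp_right: "orthogonal u v \<Longrightarrow> fsub u v \<subseteq> orthogonal_comp {v}"
  unfolding fsub_def by auto

lemma proj_fsub_eq_0:
  fixes x y z :: "real^3"
  assumes "x \<noteq> 0" "y \<noteq> 0" "z \<noteq> 0"
    and "orthogonal x y" "orthogonal y z" "orthogonal x z"
    and "w \<in> orthogonal_comp {z}"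
  shows "proj (fsub x y) w = 0"
proof (rule proj_eq_0[OF subspace_fsub], rule ballI)
  fix s
  assume "s \<in> fsub x y"
  then have "s \<in> span {z}"
    using orthogonal_comp_pair_subset_span[of x y z] assms by (auto simp: fsub_def)
  moreover have "orthogonal w z"
    using assms(7) by (simp add: orthogonal_comp_def orthogonal_commute)
  ultimately show "orthogonal w s"
    by (auto intro: orthogonal_to_span)
qed

lemma vector_trifferent_proj_fsub_eq_0:
  assumes code: "vector_trifferent n C"
    and C: "x \<in> C" "y \<in> C" "a \<in> C" "b \<in> C"
    and "x \<noteq> y" and ab: "\<not> {a, b} \<subseteq> {x, y}"
  obtains i where "i < n" "\<forall>w\<in>fsub (a ! i) (b ! i). proj (fsub (x ! i) (y ! i)) w = 0"
proof -
  obtain c where c: "c \<in> C" "c \<notin> {x, y}"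
    and fsub_perp: "\<And>i. orthogonal (x ! i) (c ! i) \<Longrightarrow> orthogonal (y ! i) (c ! i) \<Longrightarrow>
                         fsub (a ! i) (b ! i) \<subseteq> orthogonal_comp {c ! i}"
  proof (cases "a \<in> {x, y}")
    case True
    then have "b \<notin> {x, y}"
      using ab by blast
    moreover have "orthogonal (a ! i) (b ! i)"
      if "orthogonal (x ! i) (b ! i)" "orthogonal (y ! i) (b ! i)" for i
      using True that by auto
    ultimately show ?thesis
      using that[of b] C(4) fsub_subset_orthogonal_comp_right by simp
  next
    case False
    then show ?thesis
      using that[of a] C(3) fsub_subset_orthogonal_comp_left by simp
  qed
  have "\<forall>x\<in>C. \<forall>y\<in>C. \<forall>z\<in>C. x \<noteq> y \<and> y \<noteq> z \<and> x \<noteq> z \<longrightarrow>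
      (\<exists>i<n. orthogonal (x ! i) (y ! i) \<and> orthogonal (y ! i) (z ! i) \<and> orthogonal (x ! i) (z ! i))"
    using code unfolding vector_trifferent_def by (rule conjunct2)
  then obtain i where i: "i < n" "orthogonal (x ! i) (y ! i)"
      "orthogonal (y ! i) (c ! i)" "orthogonal (x ! i) (c ! i)"
    using C(1,2) c \<open>x \<noteq> y\<close> by (metis insertCI)
  have "p ! i \<noteq> 0" if "p \<in> C" for p
    using code that i(1) unfolding vector_trifferent_def by fastforce
  then have "\<forall>w\<in>fsub (a ! i) (b ! i). proj (fsub (x ! i) (y ! i)) w = 0"
    using fsub_perp[OF i(4,3)] i C c by (auto intro: proj_fsub_eq_0)
  with i(1) show ?thesis
    using that by simp
qed

lemma Pmap_Esub_self: "t \<in> Esub n x y \<Longrightarrow> Pmap n x y t = t"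
  unfolding Pmap_def Esub_def
  by (rule tensor_map_tensor_subspace_id) (auto simp: linear_proj subspace_fsub proj_eq_self)

lemma zero_in_Esub: "(\<lambda>_. 0) \<in> Esub n a b"
  unfolding Esub_def by (rule zero_in_tensor_subspace)

lemma Pmap_sum:
  "finite F \<Longrightarrow> Pmap n x y (\<lambda>js. \<Sum>p\<in>F. w p js) = (\<lambda>js. \<Sum>p\<in>F. Pmap n x y (w p) js)"
  using tensor_map_sum[of F n _ "\<lambda>_. 1" w] unfolding Pmap_def by simp

lemma asym_pairs_not_subset:
  assumes "asym r" "(x, y) \<in> r" "(a, b) \<in> r" "(a, b) \<noteq> (x, y)"
  shows "\<not> {a, b} \<subseteq> {x, y}"
  using assms unfolding asym_on_def by blast

lemma Pmap_Esub_eq_0: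
  assumes code: "vector_trifferent n C" and "asym r"
    and C: "x \<in> C" "y \<in> C" "a \<in> C" "b \<in> C"
    and r: "(x, y) \<in> r" "(a, b) \<in> r" "(a, b) \<noteq> (x, y)"
    and t: "t \<in> Esub n a b"
  shows "Pmap n x y t = (\<lambda>_. 0)"
proof -
  have "x \<noteq> y"
    using \<open>asym r\<close> r(1) unfolding asym_on_def by blast
  moreover have "\<not> {a, b} \<subseteq> {x, y}"
    using asym_pairs_not_subset[OF \<open>asym r\<close> r] .
  ultimately obtain i where "i < n" "\<forall>w\<in>fsub (a ! i) (b ! i). proj (fsub (x ! i) (y ! i)) w = 0"
    using vector_trifferent_proj_fsub_eq_0[OF code C] by blast
  then show ?thesis
    using t unfolding Pmap_def Esub_def
    by (intro tensor_map_tensor_subspace_eq_0) (auto simp: linear_proj subspace_fsub)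
qed

lemma Pmap_image_Esub:
  assumes "vector_trifferent n C" and "asym r"
    and C: "x \<in> C" "y \<in> C" "a \<in> C" "b \<in> C" and r: "(x, y) \<in> r" "(a, b) \<in> r"
  shows "Pmap n x y ` Esub n a b = (if (a, b) \<noteq> (x, y) then {\<lambda>_. 0} else Esub n a b)"
proof (cases "(a, b) = (x, y)")
  case True
  then show ?thesis
    by (simp add: Pmap_Esub_self)
next
  case False
  then have "Pmap n x y ` Esub n a b = (\<lambda>_. \<lambda>_. 0) ` Esub n a b"
    using Pmap_Esub_eq_0[OF assms] by (intro image_cong) auto
  with False show ?thesis
    using image_constant[OF zero_in_Esub] by simp
qed

lemma sum_Esub_eq_0_imp_summand_eq_0:
  assumes code: "vector_trifferent n C" and "asym r"
    and F: "finite F" "F \<subseteq> r \<inter> (C \<times> C)" and w: "\<forall>p\<in>F. w p \<in> Esub n (fst p) (snd p)"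
    and sum: "(\<lambda>js. \<Sum>p\<in>F. w p js) = (\<lambda>_. 0)" and q: "q \<in> F"
  shows "w q = (\<lambda>_. 0)"
proof -
  obtain x y where q_xy: "q = (x, y)"
    by fastforce
  have Pmap_w: "Pmap n x y (w p) = (if p = q then w q else (\<lambda>_. 0))" if p: "p \<in> F" for p
  proof (cases "p = q")
    case True
    then show ?thesis
      using w q q_xy Pmap_Esub_self by fastforce
  next
    case False
    obtain a b where p_ab: "p = (a, b)"
      by fastforce
    then have "Pmap n x y (w p) = (\<lambda>_. 0)"
      using F(2) p q q_xy False w by (intro Pmap_Esub_eq_0[OF code \<open>asym r\<close>]) auto
    with False show ?thesis
      by simp
  qed
  have "(\<lambda>_. 0) = Pmap n x y (\<lambda>js. \<Sum>p\<in>F. w p js)"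
    using sum zero_in_Esub Pmap_Esub_self by metis
  also have "\<dots> = (\<lambda>js. \<Sum>p\<in>F. if p = q then w q js else 0)"
    by (auto simp: Pmap_sum[OF F(1)] Pmap_w intro!: sum.cong)
  also have "\<dots> = w q"
    using F(1) q by (simp add: sum.delta')
  finally show ?thesis
    by simp
qed

theorem mainTheorem6:
  fixes n :: nat and C :: "(real^3) list set"
    and r :: "((real^3) list \<times> (real^3) list) set"
  assumes code: "vector_trifferent n C"
    and ord: "strict_linear_order_on C r"
  shows "(\<forall>x\<in>C. \<forall>y\<in>C. \<forall>a\<in>C. \<forall>b\<in>C. (x, y) \<in> r \<longrightarrow> (a, b) \<in> r \<longrightarrow>
            Pmap n x y ` Esub n a b = (if (a, b) \<noteq> (x, y) then {\<lambda>_. 0} else Esub n a b))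
       \<and> (\<forall>F w. finite F \<longrightarrow> F \<subseteq> r \<inter> (C \<times> C) \<longrightarrow>
            (\<forall>p\<in>F. w p \<in> Esub n (fst p) (snd p)) \<longrightarrow> (\<lambda>js. \<Sum>p\<in>F. w p js) = (\<lambda>_. 0) \<longrightarrow>
            (\<forall>p\<in>F. w p = (\<lambda>_. 0)))"
proof -
  have "asym r"
    using ord asym_on_iff_irrefl_on_if_trans_on unfolding strict_linear_order_on_def by blast
  then show ?thesis
    using Pmap_image_Esub[OF code] sum_Esub_eq_0_imp_summand_eq_0[OF code]
    by (intro conjI ballI impI allI) (simp, metis)
qed

end
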